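(* Let $n>1$, $a\in\mathcal{T}_n$ with $\operatorname{ran}(a)=\{a_1,\dots,a_p\}$ ($p=\operatorname{rank}(a)$), and put $n(a_i)=|a^{-1}(a_i)|$ for $1\le i\le p$. In the semigroup $(\mathcal{T}_n,*_a)$: for each $1\le m\le p$ there are exactly $S(n,m)$ $\mathcal{R}$-classes with more than one element consisting of maps of rank $m$, each of cardinality $$m!\sum_{1\le i_1<i_2<\cdots<i_m\le p} n(a_{i_1})\cdots n(a_{i_m});$$ these are all the multi-element $\mathcal{R}$-classes, so their number is $\sum_{m=1}^{p}S(n,m)$, and the number of one-element $\mathcal{R}$-classes equals $$n^n-\sum_{m=1}^{p}S(n,m)\,m!\sum_{1\le i_1<\cdots<i_m\le p} n(a_{i_1})\cdots n(a_{i_m}).$$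
   Context: $\mathcal{T}_n$ is the set of all maps $N\to N$, $N=\{1,\dots,n\}$. Maps are composed from left to right: $(xy)(i)=y(x(i))$. For fixed $a\in\mathcal{T}_n$, $x*_a y:=xay$. $\operatorname{ran}(x)$ is the image of $x$, $\operatorname{rank}(x)=|\operatorname{ran}(x)|$, $a^{-1}(a_i)$ is the full preimage of $a_i$. Green's relation: $x\mathcal{R}y$ iff $xS^1=yS^1$, where $S^1$ is the semigroup with an identity adjoined. $S(r,k)$ is the Stirling number of the second kind. *)

theory Defs
  imports "HOL-Library.FuncSet" "HOL-Combinatorics.Stirling"
begin

definition Tn :: "nat \<Rightarrow> (nat \<Rightarrow> nat) set" where
  "Tn n = {1..n} \<rightarrow>\<^sub>E {1..n}"

text \<open>Sandwich product x *_a y = x a y, composing left to right: (x a y)(i) = y(a(x(i))).\<close>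
definition sand :: "nat \<Rightarrow> (nat \<Rightarrow> nat) \<Rightarrow> (nat \<Rightarrow> nat) \<Rightarrow> (nat \<Rightarrow> nat) \<Rightarrow> (nat \<Rightarrow> nat)" where
  "sand n a x y = restrict (\<lambda>i. y (a (x i))) {1..n}"

definition rideal :: "nat \<Rightarrow> (nat \<Rightarrow> nat) \<Rightarrow> (nat \<Rightarrow> nat) \<Rightarrow> (nat \<Rightarrow> nat) set" where
  "rideal n a x = insert x {sand n a x s | s. s \<in> Tn n}"

definition Rclass :: "nat \<Rightarrow> (nat \<Rightarrow> nat) \<Rightarrow> (nat \<Rightarrow> nat) \<Rightarrow> (nat \<Rightarrow> nat) set" where
  "Rclass n a x = {y \<in> Tn n. rideal n a y = rideal n a x}"

definition Rclasses :: "nat \<Rightarrow> (nat \<Rightarrow> nat) \<Rightarrow> (nat \<Rightarrow> nat) set set" where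
  "Rclasses n a = Rclass n a ` Tn n"

definition rank :: "nat \<Rightarrow> (nat \<Rightarrow> nat) \<Rightarrow> nat" where
  "rank n x = card (x ` {1..n})"

definition fibre_card :: "nat \<Rightarrow> (nat \<Rightarrow> nat) \<Rightarrow> nat \<Rightarrow> nat" where
  "fibre_card n a b = card {i \<in> {1..n}. a i = b}"

text \<open>sum over i_1 < ... < i_m of n(a_{i_1}) ... n(a_{i_m}), i.e. over m-subsets of ran(a).\<close>
definition esum :: "nat \<Rightarrow> (nat \<Rightarrow> nat) \<Rightarrow> nat \<Rightarrow> nat" where
  "esum n a m = (\<Sum>I \<in> {I. I \<subseteq> a ` {1..n} \<and> card I = m}. \<Prod>b\<in>I. fibre_card n a b)"

end

theory Submission
  imports Defs
begin

(* In (T_n, *_a) the principal right ideal of x consists of x and all maps whose kernel contains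
   the kernel of x a. Hence distinct x and y are R-related iff a is injective on both ranges and x, y
   have the same kernel, and x forms a singleton class when a is not injective on its range.
   If a is injective on the range of x and rank x = m, a member of the class of x is determined by
   its range, an m-set on which a is injective (esum n a m choices), and a bijection from the range
   of x onto it (m! choices). Counting all maps of rank m on whose range a is injective in the same
   way, with surjections from N instead of bijections, gives esum n a m * m! * S(n,m); since the
   classes of rank m partition these maps, there are S(n,m) of them. *)

section \<open>Counting bijections, surjections and transversals\<close>

lemma card_bijections:
  assumes "finite A" "finite B" "card A = card B"
  shows "card {g \<in> A \<rightarrow>\<^sub>E B. bij_betw g A B} = fact (card A)"
proof -
  have "g ` A = B" if "g \<in> A \<rightarrow>\<^sub>E B" "inj_on g A" for g
    using that assms by (intro card_subset_eq) (auto simp: card_image)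
  then have "{g \<in> A \<rightarrow>\<^sub>E B. bij_betw g A B} = {g \<in> A \<rightarrow>\<^sub>E B. inj_on g A}"
    by (auto simp: bij_betw_def)
  also have "card \<dots> = (\<Prod>i = 0..<card A. card A - i)"
    using card_inj_on_subset_funcset[of A B A] assms by simp
  also have "\<dots> = fact (card A)"
    by (simp add: fact_prod_rev)
  finally show ?thesis .
qed

lemma finite_PiE_filter: "finite A \<Longrightarrow> finite B \<Longrightarrow> finite {f \<in> A \<rightarrow>\<^sub>E B. P f}"
  by (rule finite_subset[of _ "A \<rightarrow>\<^sub>E B"]) (auto simp: finite_PiE)

lemma surjections_insert_bij:
  assumes "x \<notin> A"
  shows "bij_betw (\<lambda>f. (f x, restrict f A))
     {f \<in> insert x A \<rightarrow>\<^sub>E B. f ` insert x A = B}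
     (SIGMA t:B. {g \<in> A \<rightarrow>\<^sub>E B. insert t (g ` A) = B})"
proof (rule bij_betw_byWitness[where f' = "\<lambda>(t, g). g(x := t)"])
  show "\<forall>f\<in>{f \<in> insert x A \<rightarrow>\<^sub>E B. f ` insert x A = B}. (\<lambda>(t, g). g(x := t)) (f x, restrict f A) = f"
    using assms by (auto simp: PiE_def extensional_def fun_eq_iff)
  show "\<forall>p\<in>SIGMA t:B. {g \<in> A \<rightarrow>\<^sub>E B. insert t (g ` A) = B}.
          (\<lambda>f. (f x, restrict f A)) ((\<lambda>(t, g). g(x := t)) p) = p"
    using assms by (auto simp: PiE_def extensional_def fun_eq_iff)
  show "(\<lambda>f. (f x, restrict f A)) ` {f \<in> insert x A \<rightarrow>\<^sub>E B. f ` insert x A = B}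
          \<subseteq> (SIGMA t:B. {g \<in> A \<rightarrow>\<^sub>E B. insert t (g ` A) = B})"
    by auto
  show "(\<lambda>(t, g). g(x := t)) ` (SIGMA t:B. {g \<in> A \<rightarrow>\<^sub>E B. insert t (g ` A) = B})
          \<subseteq> {f \<in> insert x A \<rightarrow>\<^sub>E B. f ` insert x A = B}"
    using assms by (auto simp: PiE_def extensional_def)
qed

lemma card_surjections_insert_value:
  assumes "finite A" "finite B" "t \<in> B"
  shows "card {g \<in> A \<rightarrow>\<^sub>E B. insert t (g ` A) = B}
    = card {g \<in> A \<rightarrow>\<^sub>E B. g ` A = B} + card {g \<in> A \<rightarrow>\<^sub>E B - {t}. g ` A = B - {t}}"
proof -
  have split: "{g \<in> A \<rightarrow>\<^sub>E B. insert t (g ` A) = B}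
      = {g \<in> A \<rightarrow>\<^sub>E B. g ` A = B} \<union> {g \<in> A \<rightarrow>\<^sub>E B - {t}. g ` A = B - {t}}"
    using assms(3) by (auto simp: PiE_def Pi_def insert_absorb)
  show ?thesis
    unfolding split using assms by (intro card_Un_disjoint finite_PiE_filter) auto
qed

lemma card_surjections:
  assumes "finite A" "finite B"
  shows "card {f \<in> A \<rightarrow>\<^sub>E B. f ` A = B} = fact (card B) * Stirling (card A) (card B)"
  using assms
proof (induction A arbitrary: B rule: finite_induct)
  case empty
  show ?case
  proof (cases "B = {}")
    case False
    with empty obtain k where "card B = Suc k"
      by (metis card_0_eq not0_implies_Suc)
    with False show ?thesis by simp
  qed simp
next
  case (insert x A)
  show ?case
  proof (cases "card B")
    case 0
    with insert show ?thesis by simp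
  next
    case (Suc k)
    have card_fibre: "card {g \<in> A \<rightarrow>\<^sub>E B. insert t (g ` A) = B}
        = fact (Suc k) * Stirling (card A) (Suc k) + fact k * Stirling (card A) k" if t: "t \<in> B" for t
    proof -
      have "card (B - {t}) = k"
        using t Suc insert.prems by simp
      then show ?thesis
        using card_surjections_insert_value[OF insert.hyps(1) insert.prems t]
          insert.IH[of B] insert.IH[of "B - {t}"] insert.prems Suc by simp
    qed
    have "card {f \<in> insert x A \<rightarrow>\<^sub>E B. f ` insert x A = B}
        = card (SIGMA t:B. {g \<in> A \<rightarrow>\<^sub>E B. insert t (g ` A) = B})"
      by (rule bij_betw_same_card[OF surjections_insert_bij[OF insert.hyps(2)]])
    also have "\<dots> = (\<Sum>t\<in>B. card {g \<in> A \<rightarrow>\<^sub>E B. insert t (g ` A) = B})"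
      using insert.prems insert.hyps(1) by (intro card_SigmaI ballI finite_PiE_filter)
    also have "\<dots> = Suc k * (fact (Suc k) * Stirling (card A) (Suc k) + fact k * Stirling (card A) k)"
      using card_fibre Suc by simp
    also have "\<dots> = fact (card B) * Stirling (card (insert x A)) (card B)"
      using Suc insert.hyps by (simp add: algebra_simps)
    finally show ?thesis .
  qed
qed

lemma bij_betw_image_transversals:
  "bij_betw (\<lambda>h. h ` I) (\<Pi>\<^sub>E b\<in>I. {i \<in> N. f i = b}) {T. T \<subseteq> N \<and> inj_on f T \<and> f ` T = I}"
  (is "bij_betw _ ?H ?T")
proof -
  have f_h: "f (h b) = b" if "h \<in> ?H" "b \<in> I" for h b
    using that by auto
  have inj_h: "inj_on f (h ` I)" if "h \<in> ?H" for h
    using f_h[OF that] by (auto simp: inj_on_def)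
  show ?thesis
  proof (rule bij_betw_byWitness[where f' = "\<lambda>T. restrict (the_inv_into T f) I"])
    show "\<forall>h\<in>?H. restrict (the_inv_into (h ` I) f) I = h"
    proof (intro ballI ext)
      fix h b assume h: "h \<in> ?H"
      show "restrict (the_inv_into (h ` I) f) I b = h b"
      proof (cases "b \<in> I")
        case True
        then have "the_inv_into (h ` I) f b = h b"
          using f_h[OF h] by (intro the_inv_into_f_eq[OF inj_h[OF h]]) auto
        with True show ?thesis by simp
      next
        case False
        with PiE_arb[OF h] show ?thesis by simp
      qed
    qed
    show "\<forall>T\<in>?T. restrict (the_inv_into T f) I ` I = T"
      by (clarsimp simp: image_restrict_eq the_inv_into_onto)
    show "(\<lambda>h. h ` I) ` ?H \<subseteq> ?T"
    proof (rule image_subsetI)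
      fix h assume h: "h \<in> ?H"
      have "h ` I \<subseteq> N" using h by auto
      moreover have "f ` h ` I = I"
        using f_h[OF h] by (simp add: image_image)
      ultimately show "h ` I \<in> ?T"
        using inj_h[OF h] by simp
    qed
    show "(\<lambda>T. restrict (the_inv_into T f) I) ` ?T \<subseteq> ?H"
    proof (rule image_subsetI)
      fix T assume "T \<in> ?T"
      then have T: "T \<subseteq> N" "inj_on f T" "f ` T = I" by auto
      show "restrict (the_inv_into T f) I \<in> ?H"
        using the_inv_into_into[OF T(2) _ T(1)] f_the_inv_into_f[OF T(2)] T(3) by auto
    qed
  qed
qed

lemma card_transversals:
  assumes "finite N" "I \<subseteq> f ` N"
  shows "card {T. T \<subseteq> N \<and> inj_on f T \<and> f ` T = I} = (\<Prod>b\<in>I. card {i \<in> N. f i = b})"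
proof -
  have "card {T. T \<subseteq> N \<and> inj_on f T \<and> f ` T = I} = card (\<Pi>\<^sub>E b\<in>I. {i \<in> N. f i = b})"
    using bij_betw_image_transversals by (rule bij_betw_same_card[symmetric])
  also have "\<dots> = (\<Prod>b\<in>I. card {i \<in> N. f i = b})"
    using assms finite_surj by (blast intro: card_PiE)
  finally show ?thesis .
qed

lemma card_inj_on_subsets:
  assumes "finite N"
  shows "card {T. T \<subseteq> N \<and> inj_on f T \<and> card T = m}
     = (\<Sum>I \<in> {I. I \<subseteq> f ` N \<and> card I = m}. \<Prod>b\<in>I. card {i \<in> N. f i = b})"
proof -
  have "{T. T \<subseteq> N \<and> inj_on f T \<and> card T = m}
      = (\<Union>I \<in> {I. I \<subseteq> f ` N \<and> card I = m}. {T. T \<subseteq> N \<and> inj_on f T \<and> f ` T = I})"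
  proof (intro equalityI subsetI)
    fix T assume T: "T \<in> {T. T \<subseteq> N \<and> inj_on f T \<and> card T = m}"
    then have "f ` T \<in> {I. I \<subseteq> f ` N \<and> card I = m}"
      by (auto simp: card_image)
    with T show "T \<in> (\<Union>I \<in> {I. I \<subseteq> f ` N \<and> card I = m}. {T. T \<subseteq> N \<and> inj_on f T \<and> f ` T = I})"
      by blast
  qed (auto simp: card_image)
  also have "card \<dots> = (\<Sum>I \<in> {I. I \<subseteq> f ` N \<and> card I = m}. card {T. T \<subseteq> N \<and> inj_on f T \<and> f ` T = I})"
    using assms by (intro card_UN_disjoint) auto
  also have "\<dots> = (\<Sum>I \<in> {I. I \<subseteq> f ` N \<and> card I = m}. \<Prod>b\<in>I. card {i \<in> N. f i = b})"
    using assms by (intro sum.cong refl card_transversals) auto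
  finally show ?thesis .
qed

section \<open>Maps in T_n and their kernels\<close>

lemma Tn_memD: "x \<in> Tn n \<Longrightarrow> i \<in> {1..n} \<Longrightarrow> x i \<in> {1..n}"
  by (auto simp: Tn_def)

lemma image_Tn_subset: "x \<in> Tn n \<Longrightarrow> x ` {1..n} \<subseteq> {1..n}"
  using Tn_memD by blast

lemma finite_Tn: "finite (Tn n)"
  by (simp add: Tn_def finite_PiE)

lemma card_Tn: "card (Tn n) = n ^ n"
  by (simp add: Tn_def card_PiE)

definition kernel_sub :: "'a set \<Rightarrow> ('a \<Rightarrow> 'b) \<Rightarrow> ('a \<Rightarrow> 'c) \<Rightarrow> bool" where
  "kernel_sub A f g \<longleftrightarrow> (\<forall>i\<in>A. \<forall>j\<in>A. f i = f j \<longrightarrow> g i = g j)"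

abbreviation same_kernel :: "'a set \<Rightarrow> ('a \<Rightarrow> 'b) \<Rightarrow> ('a \<Rightarrow> 'c) \<Rightarrow> bool" where
  "same_kernel A f g \<equiv> kernel_sub A f g \<and> kernel_sub A g f"

lemma kernel_sub_refl [simp]: "kernel_sub A f f"
  unfolding kernel_sub_def by blast

lemma kernel_sub_trans: "kernel_sub A f g \<Longrightarrow> kernel_sub A g h \<Longrightarrow> kernel_sub A f h"
  unfolding kernel_sub_def by blast

lemma kernel_sub_comp: "kernel_sub A f (g \<circ> f)"
  unfolding kernel_sub_def by simp

lemma inj_on_image_iff_kernel_sub: "inj_on g (f ` A) \<longleftrightarrow> kernel_sub A (g \<circ> f) f"
  unfolding kernel_sub_def inj_on_def by auto

lemma kernel_sub_inv_into: "kernel_sub A f g \<Longrightarrow> i \<in> A \<Longrightarrow> g (inv_into A f (f i)) = g i"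
  unfolding kernel_sub_def by (meson f_inv_into_f image_eqI inv_into_into)

lemma bij_betw_factor_through_kernel:
  assumes fg: "kernel_sub A f g" and gf: "kernel_sub A g f"
  shows "bij_betw (\<lambda>j. g (inv_into A f j)) (f ` A) (g ` A)"
proof -
  let ?h = "\<lambda>j. g (inv_into A f j)"
  have h: "?h (f i) = g i" if "i \<in> A" for i
    using kernel_sub_inv_into[OF fg that] .
  have "inj_on ?h (f ` A)"
  proof (rule inj_onI)
    fix j1 j2 assume "j1 \<in> f ` A" "j2 \<in> f ` A" and eq: "?h j1 = ?h j2"
    then obtain i1 i2 where i: "i1 \<in> A" "i2 \<in> A" "j1 = f i1" "j2 = f i2" by blast
    then have "g i1 = g i2"
      using eq h by simp
    with gf i show "j1 = j2"
      unfolding kernel_sub_def by blast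
  qed
  moreover have "?h ` f ` A = g ` A"
    using h by (force simp: image_image)
  ultimately show ?thesis
    by (simp add: bij_betw_def)
qed

lemma restrict_inv_into_comp:
  assumes "g \<in> extensional (f ` A)"
  shows "restrict (\<lambda>j. restrict (g \<circ> f) A (inv_into A f j)) (f ` A) = g"
proof
  fix j
  show "restrict (\<lambda>j. restrict (g \<circ> f) A (inv_into A f j)) (f ` A) j = g j"
  proof (cases "j \<in> f ` A")
    case True
    have "restrict (\<lambda>j. restrict (g \<circ> f) A (inv_into A f j)) (f ` A) j
        = restrict (g \<circ> f) A (inv_into A f j)"
      using True by (rule restrict_apply')
    also have "\<dots> = g (f (inv_into A f j))"
      using inv_into_into[OF True] by (simp only: restrict_apply' comp_apply)
    also have "\<dots> = g j"
      using f_inv_into_f[OF True] by (rule arg_cong)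
    finally show ?thesis .
  next
    case False
    have "g j = undefined"
      using assms False by (rule extensional_arb)
    with False show ?thesis
      by (simp only: restrict_apply if_False)
  qed
qed

lemma restrict_comp_inv_into:
  assumes "kernel_sub A f g" "g \<in> extensional A"
  shows "restrict (restrict (\<lambda>j. g (inv_into A f j)) (f ` A) \<circ> f) A = g"
proof
  fix i
  show "restrict (restrict (\<lambda>j. g (inv_into A f j)) (f ` A) \<circ> f) A i = g i"
  proof (cases "i \<in> A")
    case True
    have "f i \<in> f ` A"
      using True by (rule imageI)
    with True show ?thesis
      using kernel_sub_inv_into[OF assms(1) True] by (simp only: restrict_apply' comp_apply)
  next
    case False
    have "g i = undefined"
      using assms(2) False by (rule extensional_arb)
    with False show ?thesis
      by (simp only: restrict_apply if_False)
  qed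
qed

section \<open>Principal right ideals and R-classes of (T_n, *_a)\<close>

(* With the left-to-right composition of the paper, the product x a is the map a \<circ> x. *)
lemma sand_products:
  assumes a: "a \<in> Tn n" and x: "x \<in> Tn n"
  shows "{sand n a x s | s. s \<in> Tn n} = {y \<in> Tn n. kernel_sub {1..n} (a \<circ> x) y}"
proof (intro equalityI subsetI)
  fix y assume "y \<in> {sand n a x s | s. s \<in> Tn n}"
  then obtain s where s: "s \<in> Tn n" and y: "y = sand n a x s" by blast
  have "y \<in> Tn n"
    unfolding y sand_def Tn_def using Tn_memD[OF s] Tn_memD[OF a] Tn_memD[OF x] by auto
  moreover have "kernel_sub {1..n} (a \<circ> x) y"
    unfolding y sand_def kernel_sub_def by simp
  ultimately show "y \<in> {y \<in> Tn n. kernel_sub {1..n} (a \<circ> x) y}" by blast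
next
  fix y assume "y \<in> {y \<in> Tn n. kernel_sub {1..n} (a \<circ> x) y}"
  then have y: "y \<in> Tn n" and ker: "kernel_sub {1..n} (a \<circ> x) y" by blast+
  define s where "s = restrict (\<lambda>k. if k \<in> (a \<circ> x) ` {1..n} then y (inv_into {1..n} (a \<circ> x) k) else k) {1..n}"
  have "inv_into {1..n} (a \<circ> x) k \<in> {1..n}" if "k \<in> (a \<circ> x) ` {1..n}" for k
    using that by (rule inv_into_into)
  then have "s \<in> Tn n"
    unfolding s_def Tn_def using Tn_memD[OF y] by auto
  moreover have "sand n a x s = y"
  proof (rule PiE_ext)
    show "sand n a x s \<in> {1..n} \<rightarrow>\<^sub>E {1..n}" "y \<in> {1..n} \<rightarrow>\<^sub>E {1..n}"
      using y \<open>s \<in> Tn n\<close> unfolding Tn_def sand_def using Tn_memD[OF a] Tn_memD[OF x] by auto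
    fix i assume i: "i \<in> {1..n}"
    then have "a (x i) \<in> {1..n}"
      using Tn_memD[OF a] Tn_memD[OF x] by blast
    with i show "sand n a x s i = y i"
      using kernel_sub_inv_into[OF ker i] by (simp add: sand_def s_def)
  qed
  ultimately show "y \<in> {sand n a x s | s. s \<in> Tn n}" by blast
qed

lemma rideal_eq_insert:
  assumes "a \<in> Tn n" "x \<in> Tn n"
  shows "rideal n a x = insert x {y \<in> Tn n. kernel_sub {1..n} (a \<circ> x) y}"
  using sand_products[OF assms] by (simp add: rideal_def)

lemma same_kernel_if_rideal_eq:
  assumes a: "a \<in> Tn n" and x: "x \<in> Tn n" and y: "y \<in> Tn n"
    and eq: "rideal n a x = rideal n a y" and "x \<noteq> y"
  shows "inj_on a (x ` {1..n}) \<and> inj_on a (y ` {1..n}) \<and> same_kernel {1..n} x y"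
proof -
  have "x \<in> rideal n a x" "y \<in> rideal n a y"
    by (simp_all add: rideal_def)
  with eq have "y \<in> rideal n a x" "x \<in> rideal n a y"
    by simp_all
  with \<open>x \<noteq> y\<close> have xy: "kernel_sub {1..n} (a \<circ> x) y" and yx: "kernel_sub {1..n} (a \<circ> y) x"
    by (simp_all add: rideal_eq_insert[OF a x] rideal_eq_insert[OF a y])
  txt \<open>Now ker x \<subseteq> ker (x a) \<subseteq> ker y \<subseteq> ker (y a) \<subseteq> ker x, so all four kernels coincide.\<close>
  have "kernel_sub {1..n} (a \<circ> x) x"
    using kernel_sub_trans[OF xy kernel_sub_trans[OF kernel_sub_comp yx]] .
  moreover have "kernel_sub {1..n} (a \<circ> y) y"
    using kernel_sub_trans[OF yx kernel_sub_trans[OF kernel_sub_comp xy]] .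
  moreover have "same_kernel {1..n} x y"
    using kernel_sub_trans[OF kernel_sub_comp xy] kernel_sub_trans[OF kernel_sub_comp yx] by simp
  ultimately show ?thesis
    by (simp add: inj_on_image_iff_kernel_sub)
qed

lemma rideal_eq_if_same_kernel:
  assumes a: "a \<in> Tn n" and x: "x \<in> Tn n" and y: "y \<in> Tn n"
    and "inj_on a (x ` {1..n})" "inj_on a (y ` {1..n})" "same_kernel {1..n} x y"
  shows "rideal n a x = rideal n a y"
proof -
  from assms(4-6) have ax_x: "kernel_sub {1..n} (a \<circ> x) x" and ay_y: "kernel_sub {1..n} (a \<circ> y) y"
    and xy: "kernel_sub {1..n} x y" and yx: "kernel_sub {1..n} y x"
    by (simp_all add: inj_on_image_iff_kernel_sub)
  have "kernel_sub {1..n} (a \<circ> x) (a \<circ> y)"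
    using kernel_sub_trans[OF ax_x kernel_sub_trans[OF xy kernel_sub_comp]] .
  moreover have "kernel_sub {1..n} (a \<circ> y) (a \<circ> x)"
    using kernel_sub_trans[OF ay_y kernel_sub_trans[OF yx kernel_sub_comp]] .
  ultimately have "{z \<in> Tn n. kernel_sub {1..n} (a \<circ> x) z} = {z \<in> Tn n. kernel_sub {1..n} (a \<circ> y) z}"
    by (blast intro: kernel_sub_trans)
  moreover have "x \<in> {z \<in> Tn n. kernel_sub {1..n} (a \<circ> x) z}" "y \<in> {z \<in> Tn n. kernel_sub {1..n} (a \<circ> y) z}"
    using x y ax_x ay_y by simp_all
  ultimately show ?thesis
    unfolding rideal_eq_insert[OF a x] rideal_eq_insert[OF a y] by (simp add: insert_absorb)
qed

lemma rideal_eq_iff: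
  assumes "a \<in> Tn n" "x \<in> Tn n" "y \<in> Tn n"
  shows "rideal n a x = rideal n a y \<longleftrightarrow>
    x = y \<or> (inj_on a (x ` {1..n}) \<and> inj_on a (y ` {1..n}) \<and> same_kernel {1..n} x y)"
  using same_kernel_if_rideal_eq[OF assms] rideal_eq_if_same_kernel[OF assms] by blast

lemma Rclass_eq_singleton:
  assumes a: "a \<in> Tn n" and x: "x \<in> Tn n" and not_inj: "\<not> inj_on a (x ` {1..n})"
  shows "Rclass n a x = {x}"
proof -
  have "rideal n a y = rideal n a x \<longleftrightarrow> y = x" if "y \<in> Tn n" for y
    using rideal_eq_iff[OF a that x] not_inj by auto
  with x show ?thesis
    unfolding Rclass_def by auto
qed

lemma Rclass_eq_same_kernel:
  assumes a: "a \<in> Tn n" and x: "x \<in> Tn n" and inj: "inj_on a (x ` {1..n})"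
  shows "Rclass n a x = {y \<in> Tn n. inj_on a (y ` {1..n}) \<and> same_kernel {1..n} x y}"
proof -
  have "rideal n a y = rideal n a x \<longleftrightarrow> inj_on a (y ` {1..n}) \<and> same_kernel {1..n} x y"
    if "y \<in> Tn n" for y
    using rideal_eq_iff[OF a that x] inj by auto
  then show ?thesis
    unfolding Rclass_def by auto
qed

lemma Rclass_self: "x \<in> Tn n \<Longrightarrow> x \<in> Rclass n a x"
  by (simp add: Rclass_def)

lemma Rclasses_disjoint:
  "C1 \<in> Rclasses n a \<Longrightarrow> C2 \<in> Rclasses n a \<Longrightarrow> C1 \<noteq> C2 \<Longrightarrow> C1 \<inter> C2 = {}"
  unfolding Rclasses_def Rclass_def by blast

section \<open>Sizes of R-classes\<close>

definition inj_subsets :: "nat \<Rightarrow> (nat \<Rightarrow> nat) \<Rightarrow> nat \<Rightarrow> nat set set" where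
  "inj_subsets n a m = {T. T \<subseteq> {1..n} \<and> inj_on a T \<and> card T = m}"

lemma finite_inj_subsets: "finite (inj_subsets n a m)"
  unfolding inj_subsets_def by (rule finite_subset[of _ "Pow {1..n}"]) auto

lemma card_inj_subsets: "card (inj_subsets n a m) = esum n a m"
  unfolding inj_subsets_def esum_def fibre_card_def by (rule card_inj_on_subsets) simp

lemma card_Tn_split_by_range:
  assumes "\<And>T. T \<in> inj_subsets n a m \<Longrightarrow> card {y \<in> Tn n. P y \<and> y ` {1..n} = T} = k"
  shows "card {y \<in> Tn n. P y \<and> inj_on a (y ` {1..n}) \<and> rank n y = m} = esum n a m * k"
proof -
  have "{y \<in> Tn n. P y \<and> inj_on a (y ` {1..n}) \<and> rank n y = m}
      = (\<Union>T \<in> inj_subsets n a m. {y \<in> Tn n. P y \<and> y ` {1..n} = T})"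
    unfolding inj_subsets_def rank_def using image_Tn_subset by blast
  also have "card \<dots> = (\<Sum>T \<in> inj_subsets n a m. card {y \<in> Tn n. P y \<and> y ` {1..n} = T})"
    using finite_Tn by (intro card_UN_disjoint finite_inj_subsets) auto
  also have "\<dots> = esum n a m * k"
    using assms by (simp add: card_inj_subsets)
  finally show ?thesis .
qed

lemma card_Tn_with_range:
  assumes "T \<subseteq> {1..n}"
  shows "card {y \<in> Tn n. y ` {1..n} = T} = fact (card T) * Stirling n (card T)"
proof -
  have "{y \<in> Tn n. y ` {1..n} = T} = {f \<in> {1..n} \<rightarrow>\<^sub>E T. f ` {1..n} = T}"
    using assms by (auto simp: Tn_def PiE_iff)
  moreover have "finite T"
    using assms finite_subset by blast
  ultimately show ?thesis
    using card_surjections[of "{1..n}" T] by simp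
qed

lemma restrict_comp_bij_betw:
  assumes T: "T \<subseteq> {1..n}" and g: "g \<in> x ` {1..n} \<rightarrow>\<^sub>E T" "bij_betw g (x ` {1..n}) T"
  shows "restrict (g \<circ> x) {1..n} \<in> {y \<in> Tn n. same_kernel {1..n} x y \<and> y ` {1..n} = T}"
proof -
  have "g (x i) \<in> {1..n}" if "i \<in> {1..n}" for i
    using PiE_mem[OF g(1)] that T by blast
  then have "restrict (g \<circ> x) {1..n} \<in> Tn n"
    by (simp add: Tn_def restrict_PiE_iff)
  moreover have "same_kernel {1..n} x (restrict (g \<circ> x) {1..n})"
    using bij_betw_imp_inj_on[OF g(2)] by (auto simp: kernel_sub_def inj_on_def)
  moreover have "restrict (g \<circ> x) {1..n} ` {1..n} = T"
    using bij_betw_imp_surj_on[OF g(2)] by (simp add: image_comp)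
  ultimately show ?thesis
    by blast
qed

lemma card_same_kernel_with_range:
  assumes x: "x \<in> Tn n" and T: "T \<subseteq> {1..n}" "card T = rank n x"
  shows "card {y \<in> Tn n. same_kernel {1..n} x y \<and> y ` {1..n} = T} = fact (card T)"
proof -
  let ?X = "x ` {1..n}"
  let ?B = "{g \<in> ?X \<rightarrow>\<^sub>E T. bij_betw g ?X T}"
  let ?Y = "{y \<in> Tn n. same_kernel {1..n} x y \<and> y ` {1..n} = T}"
  have "bij_betw (\<lambda>g. restrict (g \<circ> x) {1..n}) ?B ?Y"
  proof (rule bij_betw_byWitness[where f' = "\<lambda>y. restrict (\<lambda>j. y (inv_into {1..n} x j)) ?X"])
    show "\<forall>g\<in>?B. restrict (\<lambda>j. restrict (g \<circ> x) {1..n} (inv_into {1..n} x j)) ?X = g"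
    proof
      fix g assume "g \<in> ?B"
      then have "g \<in> extensional ?X"
        by (simp add: PiE_def)
      then show "restrict (\<lambda>j. restrict (g \<circ> x) {1..n} (inv_into {1..n} x j)) ?X = g"
        by (rule restrict_inv_into_comp)
    qed
    show "\<forall>y\<in>?Y. restrict (restrict (\<lambda>j. y (inv_into {1..n} x j)) ?X \<circ> x) {1..n} = y"
    proof
      fix y assume "y \<in> ?Y"
      then have "kernel_sub {1..n} x y" "y \<in> extensional {1..n}"
        by (simp_all add: Tn_def PiE_def)
      then show "restrict (restrict (\<lambda>j. y (inv_into {1..n} x j)) ?X \<circ> x) {1..n} = y"
        by (rule restrict_comp_inv_into)
    qed
    show "(\<lambda>g. restrict (g \<circ> x) {1..n}) ` ?B \<subseteq> ?Y"
    proof (rule image_subsetI)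
      fix g assume "g \<in> ?B"
      then have "g \<in> ?X \<rightarrow>\<^sub>E T" "bij_betw g ?X T"
        by blast+
      then show "restrict (g \<circ> x) {1..n} \<in> ?Y"
        by (rule restrict_comp_bij_betw[OF T(1)])
    qed
    show "(\<lambda>y. restrict (\<lambda>j. y (inv_into {1..n} x j)) ?X) ` ?Y \<subseteq> ?B"
    proof (rule image_subsetI)
      fix y assume y: "y \<in> ?Y"
      then have "bij_betw (\<lambda>j. y (inv_into {1..n} x j)) ?X T"
        using bij_betw_factor_through_kernel[of "{1..n}" x y] by simp
      then show "restrict (\<lambda>j. y (inv_into {1..n} x j)) ?X \<in> ?B"
        by (simp add: bij_betw_imp_funcset)
    qed
  qed
  then have "card ?Y = card ?B"
    by (simp add: bij_betw_same_card)
  also have "\<dots> = fact (card T)"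
    using card_bijections[of ?X T] T finite_subset by (auto simp: rank_def)
  finally show ?thesis .
qed

lemma rank_eq_if_same_kernel:
  assumes "kernel_sub {1..n} x y" "kernel_sub {1..n} y x"
  shows "rank n x = rank n y"
  unfolding rank_def using bij_betw_factor_through_kernel[OF assms] by (rule bij_betw_same_card)

lemma rank_le_rank_if_inj:
  assumes "x \<in> Tn n" "inj_on a (x ` {1..n})"
  shows "rank n x \<le> rank n a"
proof -
  have "rank n x = card (a ` x ` {1..n})"
    using assms(2) by (simp add: rank_def card_image)
  also have "\<dots> \<le> rank n a"
    unfolding rank_def using image_Tn_subset[OF assms(1)] by (intro card_mono image_mono) auto
  finally show ?thesis .
qed

lemma rank_pos: "0 < n \<Longrightarrow> 0 < rank n x"
  by (simp add: rank_def card_gt_0_iff)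

lemma esum_pos:
  assumes "m \<le> rank n a"
  shows "0 < esum n a m"
proof -
  obtain I where I: "I \<subseteq> a ` {1..n}" "card I = m"
    using assms unfolding rank_def by (rule obtain_subset_with_card_n)
  have "0 < fibre_card n a b" if "b \<in> I" for b
  proof -
    from that I(1) obtain i where "i \<in> {1..n}" "a i = b"
      by blast
    then show ?thesis
      unfolding fibre_card_def by (intro card_gt_0_iff[THEN iffD2]) auto
  qed
  then have "0 < (\<Prod>b\<in>I. fibre_card n a b)"
    by (rule prod_pos)
  moreover have "finite {I. I \<subseteq> a ` {1..n} \<and> card I = m}"
    by simp
  ultimately show ?thesis
    unfolding esum_def using I by (intro sum_pos2[where i = I]) simp_all
qed

lemma esum_1: "esum n a 1 = n"
proof -
  have "inj_subsets n a 1 = (\<lambda>t. {t}) ` {1..n}"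
    unfolding inj_subsets_def by (auto simp: card_1_singleton_iff)
  then show ?thesis
    using card_inj_subsets[of n a 1] by (simp add: card_image)
qed

lemma card_Rclass:
  assumes a: "a \<in> Tn n" and x: "x \<in> Tn n" and inj: "inj_on a (x ` {1..n})"
  shows "card (Rclass n a x) = fact (rank n x) * esum n a (rank n x)"
proof -
  have R: "Rclass n a x
      = {y \<in> Tn n. same_kernel {1..n} x y \<and> inj_on a (y ` {1..n}) \<and> rank n y = rank n x}"
    unfolding Rclass_eq_same_kernel[OF a x inj] using rank_eq_if_same_kernel[of n x] by auto
  have "card {y \<in> Tn n. same_kernel {1..n} x y \<and> inj_on a (y ` {1..n}) \<and> rank n y = rank n x}
      = esum n a (rank n x) * fact (rank n x)"
  proof (rule card_Tn_split_by_range)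
    fix T assume "T \<in> inj_subsets n a (rank n x)"
    then have T: "T \<subseteq> {1..n}" "card T = rank n x"
      by (simp_all add: inj_subsets_def)
    show "card {y \<in> Tn n. same_kernel {1..n} x y \<and> y ` {1..n} = T} = fact (rank n x)"
      using card_same_kernel_with_range[OF x T] unfolding T(2) .
  qed
  then show ?thesis
    unfolding R by (simp add: mult.commute)
qed

lemma card_inj_on_range_of_rank:
  "card {y \<in> Tn n. inj_on a (y ` {1..n}) \<and> rank n y = m} = esum n a m * (fact m * Stirling n m)"
proof -
  have "card {y \<in> Tn n. True \<and> inj_on a (y ` {1..n}) \<and> rank n y = m} = esum n a m * (fact m * Stirling n m)"
  proof (rule card_Tn_split_by_range)
    fix T assume "T \<in> inj_subsets n a m"
    then show "card {y \<in> Tn n. True \<and> y ` {1..n} = T} = fact m * Stirling n m"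
      using card_Tn_with_range[of T n] by (simp add: inj_subsets_def)
  qed
  then show ?thesis
    by simp
qed

lemma one_lt_card_Rclass_iff:
  assumes n: "1 < n" and a: "a \<in> Tn n" and x: "x \<in> Tn n"
  shows "1 < card (Rclass n a x) \<longleftrightarrow> inj_on a (x ` {1..n})"
proof
  assume inj: "inj_on a (x ` {1..n})"
  define m where "m = rank n x"
  have "0 < m" "0 < esum n a m"
    using n rank_pos esum_pos rank_le_rank_if_inj[OF x inj] unfolding m_def by auto
  moreover have "1 < fact m * esum n a m"
  proof (cases "m = 1")
    case True
    with n show ?thesis using esum_1[of n a] by simp
  next
    case False
    with \<open>0 < m\<close> have "(2::nat) \<le> fact m"
      using fact_ge_self[of m] by linarith
    with \<open>0 < esum n a m\<close> have "2 * 1 \<le> fact m * esum n a m"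
      by (intro mult_le_mono) auto
    then show ?thesis
      by simp
  qed
  ultimately show "1 < card (Rclass n a x)"
    by (simp add: card_Rclass[OF a x inj] m_def)
next
  assume "1 < card (Rclass n a x)"
  then show "inj_on a (x ` {1..n})"
    by (rule contrapos_pp) (simp add: Rclass_eq_singleton[OF a x])
qed

lemma Rclass_subset_inj_of_rank:
  assumes "a \<in> Tn n" "x \<in> Tn n" "inj_on a (x ` {1..n})"
  shows "Rclass n a x \<subseteq> {y \<in> Tn n. inj_on a (y ` {1..n}) \<and> rank n y = rank n x}"
  unfolding Rclass_eq_same_kernel[OF assms] using rank_eq_if_same_kernel[of n x] by auto

section \<open>Counting R-classes\<close>

lemma multi_RclassE:
  assumes "1 < n" "a \<in> Tn n" "C \<in> Rclasses n a" "1 < card C"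
  obtains x where "x \<in> Tn n" "inj_on a (x ` {1..n})" "C = Rclass n a x"
  using assms one_lt_card_Rclass_iff unfolding Rclasses_def by blast

lemma multi_Rclasses_of_rank_eq:
  assumes n: "1 < n" and a: "a \<in> Tn n"
  shows "{C \<in> Rclasses n a. 1 < card C \<and> (\<forall>x\<in>C. rank n x = m)}
       = Rclass n a ` {y \<in> Tn n. inj_on a (y ` {1..n}) \<and> rank n y = m}"
proof (intro equalityI subsetI)
  fix C assume "C \<in> {C \<in> Rclasses n a. 1 < card C \<and> (\<forall>x\<in>C. rank n x = m)}"
  then have C: "C \<in> Rclasses n a" "1 < card C" and rank: "\<forall>x\<in>C. rank n x = m"
    by blast+
  obtain x where x: "x \<in> Tn n" "inj_on a (x ` {1..n})" "C = Rclass n a x"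
    using multi_RclassE[OF n a C] .
  with rank Rclass_self[OF x(1)] show "C \<in> Rclass n a ` {y \<in> Tn n. inj_on a (y ` {1..n}) \<and> rank n y = m}"
    by blast
next
  fix C assume "C \<in> Rclass n a ` {y \<in> Tn n. inj_on a (y ` {1..n}) \<and> rank n y = m}"
  then obtain y where y: "y \<in> Tn n" "inj_on a (y ` {1..n})" "rank n y = m" and C: "C = Rclass n a y"
    by blast
  have "C \<in> Rclasses n a"
    using y(1) C by (simp add: Rclasses_def)
  moreover have "1 < card C"
    using one_lt_card_Rclass_iff[OF n a y(1)] y(2) C by simp
  moreover have "\<forall>x\<in>C. rank n x = m"
    using Rclass_subset_inj_of_rank[OF a y(1,2)] y(3) C by blast
  ultimately show "C \<in> {C \<in> Rclasses n a. 1 < card C \<and> (\<forall>x\<in>C. rank n x = m)}"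
    by blast
qed

lemma card_multi_Rclasses_of_rank:
  assumes n: "1 < n" and a: "a \<in> Tn n" and m: "m \<le> rank n a"
  shows "card {C \<in> Rclasses n a. 1 < card C \<and> (\<forall>x\<in>C. rank n x = m)} = Stirling n m"
proof -
  let ?R = "{y \<in> Tn n. inj_on a (y ` {1..n}) \<and> rank n y = m}"
  let ?C = "Rclass n a ` ?R"
  have "\<Union>?C = ?R"
    using Rclass_subset_inj_of_rank[OF a] Rclass_self by blast
  moreover have "fact m * esum n a m * card ?C = card (\<Union>?C)"
  proof (rule card_partition)
    show "finite ?C"
      using finite_Tn by simp
    show "finite (\<Union>?C)"
      using finite_Tn \<open>\<Union>?C = ?R\<close> by simp
    show "card C = fact m * esum n a m" if "C \<in> ?C" for C
      using that card_Rclass[OF a] by auto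
    show "C1 \<inter> C2 = {}" if "C1 \<in> ?C" "C2 \<in> ?C" "C1 \<noteq> C2" for C1 C2
      using that Rclasses_disjoint unfolding Rclasses_def by blast
  qed
  ultimately have "fact m * esum n a m * card ?C = fact m * esum n a m * Stirling n m"
    using card_inj_on_range_of_rank[of n a m] by (simp add: mult_ac)
  moreover have "0 < fact m * esum n a m"
    using esum_pos[OF m] by simp
  ultimately have "card ?C = Stirling n m"
    by simp
  then show ?thesis
    unfolding multi_Rclasses_of_rank_eq[OF n a] .
qed

lemma card_multi_Rclass:
  assumes n: "1 < n" and a: "a \<in> Tn n" and C: "C \<in> Rclasses n a" "1 < card C"
    and rank: "\<forall>x\<in>C. rank n x = m"
  shows "card C = fact m * esum n a m"
proof -
  obtain x where x: "x \<in> Tn n" "inj_on a (x ` {1..n})" "C = Rclass n a x"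
    using multi_RclassE[OF n a C] .
  moreover have "rank n x = m"
    using rank Rclass_self[OF x(1)] x(3) by blast
  ultimately show ?thesis
    using card_Rclass[OF a x(1,2)] by simp
qed

lemma multi_Rclass_rank:
  assumes n: "1 < n" and a: "a \<in> Tn n" and C: "C \<in> Rclasses n a" "1 < card C"
  shows "\<exists>m\<in>{1..rank n a}. \<forall>x\<in>C. rank n x = m"
proof -
  obtain x where x: "x \<in> Tn n" "inj_on a (x ` {1..n})" "C = Rclass n a x"
    using multi_RclassE[OF n a C] .
  have "rank n x \<in> {1..rank n a}"
    using n rank_pos[of n x] rank_le_rank_if_inj[OF x(1,2)] by simp
  moreover have "\<forall>y\<in>C. rank n y = rank n x"
    using Rclass_subset_inj_of_rank[OF a x(1,2)] x(3) by blast
  ultimately show ?thesis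
    by blast
qed

lemma card_multi_Rclasses:
  assumes n: "1 < n" and a: "a \<in> Tn n"
  shows "card {C \<in> Rclasses n a. 1 < card C} = (\<Sum>m = 1..rank n a. Stirling n m)"
proof -
  let ?M = "\<lambda>m. {C \<in> Rclasses n a. 1 < card C \<and> (\<forall>x\<in>C. rank n x = m)}"
  have "{C \<in> Rclasses n a. 1 < card C} = (\<Union>m \<in> {1..rank n a}. ?M m)"
    using multi_Rclass_rank[OF n a] by blast
  moreover have "finite (?M m)" for m
    using finite_Tn unfolding Rclasses_def by simp
  moreover have "?M m1 \<inter> ?M m2 = {}" if "m1 \<noteq> m2" for m1 m2
    using that by (fastforce simp: card_gt_0_iff)
  ultimately have "card {C \<in> Rclasses n a. 1 < card C} = (\<Sum>m = 1..rank n a. card (?M m))"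
    by (simp add: card_UN_disjoint)
  then show ?thesis
    using card_multi_Rclasses_of_rank[OF n a] by simp
qed

lemma singleton_Rclasses_eq:
  assumes n: "1 < n" and a: "a \<in> Tn n"
  shows "{C \<in> Rclasses n a. card C = 1} = (\<lambda>x. {x}) ` {x \<in> Tn n. \<not> inj_on a (x ` {1..n})}"
proof (intro equalityI subsetI)
  fix C assume "C \<in> {C \<in> Rclasses n a. card C = 1}"
  then obtain x where x: "x \<in> Tn n" "C = Rclass n a x" and "card C = 1"
    unfolding Rclasses_def by blast
  then have "\<not> inj_on a (x ` {1..n})"
    using one_lt_card_Rclass_iff[OF n a x(1)] by simp
  with x show "C \<in> (\<lambda>x. {x}) ` {x \<in> Tn n. \<not> inj_on a (x ` {1..n})}"
    using Rclass_eq_singleton[OF a x(1)] by blast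
next
  fix C assume "C \<in> (\<lambda>x. {x}) ` {x \<in> Tn n. \<not> inj_on a (x ` {1..n})}"
  then obtain x where x: "x \<in> Tn n" "\<not> inj_on a (x ` {1..n})" and C: "C = {x}"
    by blast
  then have "C = Rclass n a x"
    using Rclass_eq_singleton[OF a x] by simp
  with x(1) C show "C \<in> {C \<in> Rclasses n a. card C = 1}"
    unfolding Rclasses_def by auto
qed

lemma card_inj_on_range:
  assumes "0 < n"
  shows "card {y \<in> Tn n. inj_on a (y ` {1..n})} = (\<Sum>m = 1..rank n a. Stirling n m * fact m * esum n a m)"
proof -
  let ?R = "\<lambda>m. {y \<in> Tn n. inj_on a (y ` {1..n}) \<and> rank n y = m}"
  have I: "{y \<in> Tn n. inj_on a (y ` {1..n})} = (\<Union>m \<in> {1..rank n a}. ?R m)"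
  proof (intro equalityI subsetI)
    fix y assume "y \<in> {y \<in> Tn n. inj_on a (y ` {1..n})}"
    then have y: "y \<in> Tn n" "inj_on a (y ` {1..n})"
      by blast+
    then have "rank n y \<in> {1..rank n a}"
      using rank_pos[OF assms, of y] rank_le_rank_if_inj by simp
    with y show "y \<in> (\<Union>m \<in> {1..rank n a}. ?R m)"
      by blast
  qed blast
  have "card {y \<in> Tn n. inj_on a (y ` {1..n})} = (\<Sum>m = 1..rank n a. card (?R m))"
    unfolding I using finite_Tn by (intro card_UN_disjoint) auto
  then show ?thesis
    using card_inj_on_range_of_rank[of n a] by (simp add: mult_ac)
qed

lemma card_singleton_Rclasses:
  assumes n: "1 < n" and a: "a \<in> Tn n"
  shows "int (card {C \<in> Rclasses n a. card C = 1})
    = int n ^ n - (\<Sum>m = 1..rank n a. int (Stirling n m * fact m * esum n a m))"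
proof -
  let ?I = "{y \<in> Tn n. inj_on a (y ` {1..n})}"
  have "{x \<in> Tn n. \<not> inj_on a (x ` {1..n})} = Tn n - ?I"
    by blast
  then have "card {C \<in> Rclasses n a. card C = 1} = card (Tn n - ?I)"
    unfolding singleton_Rclasses_eq[OF n a] by (simp add: card_image)
  also have "\<dots> = card (Tn n) - card ?I"
    using finite_Tn by (intro card_Diff_subset) auto
  finally have "int (card {C \<in> Rclasses n a. card C = 1}) = int (card (Tn n)) - int (card ?I)"
    using card_mono[OF finite_Tn, of ?I] by auto
  then show ?thesis
    using n card_inj_on_range[of n a] by (simp add: card_Tn of_nat_sum)
qed

theorem proposition7:
  fixes n :: nat and a :: "nat \<Rightarrow> nat"
  assumes "n > 1" and "a \<in> Tn n"
  shows "(\<forall>m \<in> {1..rank n a}.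
            card {C \<in> Rclasses n a. card C > 1 \<and> (\<forall>x\<in>C. rank n x = m)} = Stirling n m
          \<and> (\<forall>C \<in> Rclasses n a. card C > 1 \<and> (\<forall>x\<in>C. rank n x = m)
                 \<longrightarrow> card C = fact m * esum n a m))
       \<and> {C \<in> Rclasses n a. card C > 1}
           = {C \<in> Rclasses n a. card C > 1 \<and> (\<exists>m \<in> {1..rank n a}. \<forall>x\<in>C. rank n x = m)}
       \<and> card {C \<in> Rclasses n a. card C > 1} = (\<Sum>m = 1..rank n a. Stirling n m)
       \<and> int (card {C \<in> Rclasses n a. card C = 1})
           = int n ^ n - (\<Sum>m = 1..rank n a. int (Stirling n m * fact m * esum n a m))"
  using card_multi_Rclasses_of_rank[OF assms] card_multi_Rclass[OF assms]
    multi_Rclass_rank[OF assms] card_multi_Rclasses[OF assms] card_singleton_Rclasses[OF assms]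
  by auto

end
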